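(* Let $b:X\times X\to[0,\infty)$ on a countable set $X$ be such that $(b,0)$ is a locally finite, connected graph, and let $G$ be a nilpotent group acting cocompactly on $X$ such that $H_{b,0}$ is $G$-invariant. Then every bounded harmonic function (i.e. bounded $f$ with $H_{b,0}f=0$) is constant.
   Context: A graph over $X$ is $(b,c)$ with $\sum_yb(x,y)<\infty$ for all $x$ ($b$ need not be symmetric); here $c=0$. Locally finite: each $x$ has finitely many $y$ with $b(x,y)>0$; connected: any $x,z$ are joined by a finite sequence $y_1,\dots,y_n$ with $b(y_i,y_{i+1})>0$. $H_{b,0}f(x)=\sum_yb(x,y)(f(x)-f(y))$. $T_gf(x)=f(g^{-1}x)$; cocompact: $GV=X$ for some finite $V$; $H$ is $G$-invariant if $T_g$ preserves its domain $\{f:\sum_yb(x,y)|f(y)|<\infty\ \forall x\}$ and $HT_g=T_gH$ for all $g$. *)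

theory Defs
  imports "HOL-Analysis.Analysis" "HOL-Algebra.Algebra"
begin

fun lower_central :: "('g, 'b) monoid_scheme \<Rightarrow> nat \<Rightarrow> 'g set" where
  "lower_central G 0 = carrier G"
| "lower_central G (Suc n) = generate G
     (\<Union>a \<in> lower_central G n. \<Union>c \<in> carrier G.
        { a \<otimes>\<^bsub>G\<^esub> c \<otimes>\<^bsub>G\<^esub> inv\<^bsub>G\<^esub> a \<otimes>\<^bsub>G\<^esub> inv\<^bsub>G\<^esub> c })"

definition nilpotent_group :: "('g, 'b) monoid_scheme \<Rightarrow> bool" where
  "nilpotent_group G \<longleftrightarrow> group G \<and> (\<exists>n. lower_central G n = {\<one>\<^bsub>G\<^esub>})"

definition locally_finite_graph :: "('x \<Rightarrow> 'x \<Rightarrow> real) \<Rightarrow> bool" where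
  "locally_finite_graph b \<longleftrightarrow> (\<forall>x. finite {y. b x y > 0})"

definition connected_graph :: "('x \<Rightarrow> 'x \<Rightarrow> real) \<Rightarrow> bool" where
  "connected_graph b \<longleftrightarrow> (\<forall>x z. (\<lambda>u v. b u v > 0)\<^sup>*\<^sup>* x z)"

text \<open>Graph condition: b nonnegative with finite row sums (c = 0).\<close>
definition is_graph :: "('x \<Rightarrow> 'x \<Rightarrow> real) \<Rightarrow> bool" where
  "is_graph b \<longleftrightarrow> (\<forall>x y. b x y \<ge> 0) \<and> (\<forall>x. (b x) summable_on UNIV)"

definition H_dom :: "('x \<Rightarrow> 'x \<Rightarrow> real) \<Rightarrow> ('x \<Rightarrow> real) set" where
  "H_dom b = {f. \<forall>x. (\<lambda>y. b x y * \<bar>f y\<bar>) summable_on UNIV}"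

definition H_op :: "('x \<Rightarrow> 'x \<Rightarrow> real) \<Rightarrow> ('x \<Rightarrow> real) \<Rightarrow> 'x \<Rightarrow> real" where
  "H_op b f x = (\<Sum>\<^sub>\<infinity>y. b x y * (f x - f y))"

definition T_act :: "('g, 'c) monoid_scheme \<Rightarrow> ('g \<Rightarrow> 'x \<Rightarrow> 'x) \<Rightarrow> 'g \<Rightarrow> ('x \<Rightarrow> real) \<Rightarrow> 'x \<Rightarrow> real" where
  "T_act G \<phi> g f x = f (\<phi> (inv\<^bsub>G\<^esub> g) x)"

definition H_invariant :: "('g, 'c) monoid_scheme \<Rightarrow> ('g \<Rightarrow> 'x \<Rightarrow> 'x) \<Rightarrow> ('x \<Rightarrow> 'x \<Rightarrow> real) \<Rightarrow> bool" where
  "H_invariant G \<phi> b \<longleftrightarrow> (\<forall>g \<in> carrier G. \<forall>f \<in> H_dom b.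
      T_act G \<phi> g f \<in> H_dom b \<and> H_op b (T_act G \<phi> g f) = T_act G \<phi> g (H_op b f))"

definition cocompact :: "('g, 'c) monoid_scheme \<Rightarrow> ('g \<Rightarrow> 'x \<Rightarrow> 'x) \<Rightarrow> bool" where
  "cocompact G \<phi> \<longleftrightarrow> (\<exists>V. finite V \<and> (\<Union>g \<in> carrier G. \<phi> g ` V) = UNIV)"

end

theory Submission
  imports Defs
begin

text \<open>
  Normalise bounded harmonic functions to sup-norm at most 1; this class is invariant under
  the action. For z in G let S be the supremum of the displacements f (z x) - f x over the
  class, and suppose z is central modulo a subgroup N under which every such f is already
  invariant. Then S \<le> 0: by cocompactness a near-extremal displacement can be moved to a
  point v of a finite set V, and the Harnack inequality, applied to the nonnegative harmonic
  functions S - (f (z^(k+1) y) - f (z^k y)), keeps the increments of f along the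
  z-orbit of v close to S for n steps. So f would grow by about n S / 2, which is impossible
  for large n since \<bar>f\<bar> \<le> 1. Descending the lower central series, every bounded harmonic
  function is therefore G-invariant; it then attains its maximum on V, and Harnack (the
  maximum principle) makes it constant.
\<close>

definition harmonic :: "('x \<Rightarrow> 'x \<Rightarrow> real) \<Rightarrow> ('x \<Rightarrow> real) \<Rightarrow> bool" where
  "harmonic b f \<longleftrightarrow> (\<forall>x. (\<Sum>y | 0 < b x y. b x y * (f x - f y)) = 0)"

lemma harmonic_const: "harmonic b (\<lambda>_. c)"
  unfolding harmonic_def by simp

lemma harmonic_diff:
  assumes "harmonic b f" "harmonic b g"
  shows "harmonic b (\<lambda>x. f x - g x)"
proof -
  have "(\<Sum>y | 0 < b x y. b x y * ((f x - g x) - (f y - g y)))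
      = (\<Sum>y | 0 < b x y. b x y * (f x - f y)) - (\<Sum>y | 0 < b x y. b x y * (g x - g y))" for x
    by (simp add: sum_subtractf[symmetric] algebra_simps)
  then show ?thesis
    using assms unfolding harmonic_def by simp
qed

lemma harmonic_cmult:
  assumes "harmonic b f"
  shows "harmonic b (\<lambda>x. c * f x)"
proof -
  have "(\<Sum>y | 0 < b x y. b x y * (c * f x - c * f y)) = c * (\<Sum>y | 0 < b x y. b x y * (f x - f y))" for x
    by (simp add: sum_distrib_left algebra_simps)
  then show ?thesis
    using assms unfolding harmonic_def by simp
qed

lemma has_sum_row_finite:
  assumes "is_graph b" "locally_finite_graph b"
  shows "((\<lambda>y. b x y * g y) has_sum (\<Sum>y | 0 < b x y. b x y * g y)) UNIV"
proof (rule has_sum_cong_neutral[THEN iffD1])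
  show "((\<lambda>y. b x y * g y) has_sum (\<Sum>y | 0 < b x y. b x y * g y)) {y. 0 < b x y}"
    using assms(2) unfolding locally_finite_graph_def by simp
  show "b x y * g y = 0" if "y \<in> UNIV - {y. 0 < b x y}" for y
    using assms(1) that unfolding is_graph_def by (auto simp: order.order_iff_strict)
qed auto

lemma H_dom_eq_UNIV:
  assumes "is_graph b" "locally_finite_graph b"
  shows "H_dom b = UNIV"
  unfolding H_dom_def using has_sum_imp_summable[OF has_sum_row_finite[OF assms]] by auto

lemma harmonic_iff_H_op:
  assumes "is_graph b" "locally_finite_graph b"
  shows "harmonic b f \<longleftrightarrow> H_op b f = (\<lambda>x. 0)"
  unfolding harmonic_def H_op_def fun_eq_iff
  using infsumI[OF has_sum_row_finite[OF assms]] by simp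

lemma harnack_edge:
  assumes "locally_finite_graph b" "harmonic b u" "\<And>y. 0 \<le> u y" "0 < b v w"
  shows "b v w * u w \<le> (\<Sum>y | 0 < b v y. b v y) * u v"
proof -
  let ?A = "{y. 0 < b v y}"
  have "(\<Sum>y\<in>?A. b v y) * u v - (\<Sum>y\<in>?A. b v y * u y) = (\<Sum>y\<in>?A. b v y * (u v - u y))"
    by (simp add: sum_distrib_right right_diff_distrib sum_subtractf)
  also have "\<dots> = 0"
    using assms(2) unfolding harmonic_def by simp
  finally have "(\<Sum>y\<in>?A. b v y * u y) = (\<Sum>y\<in>?A. b v y) * u v"
    by simp
  moreover have "b v w * u w \<le> (\<Sum>y\<in>?A. b v y * u y)"
    using assms unfolding locally_finite_graph_def
    by (intro member_le_sum) auto
  ultimately show ?thesis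
    by simp
qed

lemma harnack_path:
  assumes "locally_finite_graph b" "(\<lambda>x y. 0 < b x y)\<^sup>*\<^sup>* v w"
  shows "\<exists>K\<ge>1. \<forall>u. harmonic b u \<longrightarrow> (\<forall>y. 0 \<le> u y) \<longrightarrow> u w \<le> K * u v"
  using assms(2)
proof (induction rule: rtranclp_induct)
  case base
  show ?case
    by auto
next
  case (step x w)
  then obtain K where K: "K \<ge> 1"
    and harnack_vx: "\<And>u. harmonic b u \<Longrightarrow> \<forall>y. 0 \<le> u y \<Longrightarrow> u x \<le> K * u v"
    by blast
  define D where "D = max 1 ((\<Sum>y | 0 < b x y. b x y) / b x w)"
  have "u w \<le> (D * K) * u v" if u: "harmonic b u" "\<forall>y. 0 \<le> u y" for u
  proof -
    have "u w \<le> ((\<Sum>y | 0 < b x y. b x y) / b x w) * u x"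
      using harnack_edge[OF assms(1) u(1) _ step(2)] u(2) step(2)
      by (simp add: field_simps)
    also have "\<dots> \<le> D * u x"
      unfolding D_def using u(2) by (intro mult_right_mono) auto
    also have "\<dots> \<le> D * (K * u v)"
      unfolding D_def using harnack_vx[OF u] by (intro mult_left_mono) auto
    finally show ?thesis
      by (simp add: mult.assoc)
  qed
  moreover have "1 \<le> D * K"
    using K unfolding D_def by (metis max.cobounded1 mult_mono' mult_1 zero_le_one)
  ultimately show ?case
    by blast
qed

lemma harnack_finite:
  assumes "locally_finite_graph b" "connected_graph b" "finite P"
  shows "\<exists>K\<ge>1. \<forall>u. harmonic b u \<longrightarrow> (\<forall>y. 0 \<le> u y) \<longrightarrow> (\<forall>(v, w)\<in>P. u w \<le> K * u v)"
  using assms(3)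
proof (induction rule: finite_induct)
  case empty
  show ?case
    by auto
next
  case (insert p P)
  obtain v w where p: "p = (v, w)"
    by fastforce
  obtain K where K: "K \<ge> 1"
    and harnack_P: "\<And>u. harmonic b u \<Longrightarrow> \<forall>y. 0 \<le> u y \<Longrightarrow> \<forall>(v, w)\<in>P. u w \<le> K * u v"
    using insert.IH by blast
  obtain L where L: "L \<ge> 1"
    and harnack_p: "\<And>u. harmonic b u \<Longrightarrow> \<forall>y. 0 \<le> u y \<Longrightarrow> u w \<le> L * u v"
    using harnack_path[OF assms(1)] assms(2) unfolding connected_graph_def by blast
  have "\<forall>(v', w')\<in>insert p P. u w' \<le> max K L * u v'" if "harmonic b u" "\<forall>y. 0 \<le> u y" for u
  proof -
    have "K * u v' \<le> max K L * u v'" "L * u v' \<le> max K L * u v'" for v'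
      using that(2) by (simp_all add: mult_right_mono)
    with harnack_P[OF that] harnack_p[OF that] show ?thesis
      unfolding p by (fastforce intro: order_trans)
  qed
  then show ?case
    using K by (intro exI[of _ "max K L"]) auto
qed

lemma (in group) lower_central_subgroup: "subgroup (lower_central G k) G"
proof (induction k)
  case 0
  show ?case
    using subgroup_self by simp
next
  case (Suc k)
  then have "lower_central G k \<subseteq> carrier G"
    by (rule subgroup.subset)
  then show ?case
    by (auto intro!: generate_is_subgroup)
qed

lemma (in group) lower_central_commute:
  assumes z: "z \<in> lower_central G k" and g: "g \<in> carrier G"
  shows "\<exists>n \<in> lower_central G (Suc k). z \<otimes> g = g \<otimes> z \<otimes> n"
proof
  have zG: "z \<in> carrier G"
    using z lower_central_subgroup subgroup.mem_carrier by metis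
  have "inv z \<in> lower_central G k"
    using z lower_central_subgroup subgroup.m_inv_closed by metis
  then have "inv z \<otimes> inv g \<otimes> inv (inv z) \<otimes> inv (inv g) \<in> lower_central G (Suc k)"
    unfolding lower_central.simps using g
    by (intro generate.incl UN_I[of "inv z"] UN_I[of "inv g"]) auto
  then show "inv z \<otimes> inv g \<otimes> z \<otimes> g \<in> lower_central G (Suc k)"
    using zG g by simp
  have "inv z \<otimes> inv g \<otimes> z \<otimes> g = inv (g \<otimes> z) \<otimes> (z \<otimes> g)"
    using zG g by (simp add: inv_mult_group m_assoc)
  then show "z \<otimes> g = g \<otimes> z \<otimes> (inv z \<otimes> inv g \<otimes> z \<otimes> g)"
    using zG g by (metis inv_solve_left' m_closed inv_closed)
qed

locale harmonic_action =
  fixes b :: "'x \<Rightarrow> 'x \<Rightarrow> real" and G :: "('g, 'c) monoid_scheme" and \<phi> :: "'g \<Rightarrow> 'x \<Rightarrow> 'x"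
  assumes graph: "is_graph b" and locally_finite: "locally_finite_graph b"
    and connected: "connected_graph b" and G_group: "group G"
    and action: "group_action G UNIV \<phi>" and cocompact_action: "cocompact G \<phi>"
    and H_commutes: "H_invariant G \<phi> b"
begin

lemma action_one: "\<phi> \<one>\<^bsub>G\<^esub> x = x"
  using group_action.id_eq_one[OF action] by (metis UNIV_I restrict_apply')

lemma action_mult: "g \<in> carrier G \<Longrightarrow> h \<in> carrier G \<Longrightarrow> \<phi> (g \<otimes>\<^bsub>G\<^esub> h) x = \<phi> g (\<phi> h x)"
  using group_action.composition_rule[OF action] by blast

lemma harmonic_translate:
  assumes f: "harmonic b f" and g: "g \<in> carrier G"
  shows "harmonic b (\<lambda>x. f (\<phi> g x))"
proof -
  have inv_g: "inv\<^bsub>G\<^esub> g \<in> carrier G"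
    using G_group g by simp
  have T: "T_act G \<phi> (inv\<^bsub>G\<^esub> g) f = (\<lambda>x. f (\<phi> g x))"
    unfolding T_act_def using G_group g by (simp add: group.inv_inv)
  have "H_op b (T_act G \<phi> (inv\<^bsub>G\<^esub> g) f) = T_act G \<phi> (inv\<^bsub>G\<^esub> g) (H_op b f)"
    using H_commutes inv_g H_dom_eq_UNIV[OF graph locally_finite] unfolding H_invariant_def by blast
  also have "\<dots> = (\<lambda>x. 0)"
    using f unfolding harmonic_iff_H_op[OF graph locally_finite] T_act_def by simp
  finally show ?thesis
    unfolding harmonic_iff_H_op[OF graph locally_finite] T .
qed

definition unit_harmonic :: "('x \<Rightarrow> real) set" where
  "unit_harmonic = {f. harmonic b f \<and> (\<forall>x. \<bar>f x\<bar> \<le> 1)}"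

lemma unit_harmonic_translate:
  "f \<in> unit_harmonic \<Longrightarrow> g \<in> carrier G \<Longrightarrow> (\<lambda>x. f (\<phi> g x)) \<in> unit_harmonic"
  unfolding unit_harmonic_def using harmonic_translate by auto

lemma unit_harmonic_iterate:
  assumes "f \<in> unit_harmonic" "g \<in> carrier G"
  shows "(\<lambda>x. f ((\<phi> g ^^ k) x)) \<in> unit_harmonic"
proof (induction k)
  case 0
  then show ?case
    using assms(1) by simp
next
  case (Suc k)
  then show ?case
    using unit_harmonic_translate[OF Suc assms(2)] by (simp add: funpow_Suc_right del: funpow.simps)
qed

lemma unit_harmonic_uminus: "f \<in> unit_harmonic \<Longrightarrow> (\<lambda>x. - f x) \<in> unit_harmonic"
  unfolding unit_harmonic_def using harmonic_cmult[of b f "-1"] by auto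

lemma unit_harmonic_diff_le:
  assumes "f \<in> unit_harmonic"
  shows "f x - f y \<le> 2"
proof -
  have "\<bar>f x\<bar> \<le> 1" "\<bar>f y\<bar> \<le> 1"
    using assms unfolding unit_harmonic_def by simp_all
  then show ?thesis
    by linarith
qed

lemma unit_harmonic_commute:
  assumes N_inv: "\<And>f n x. f \<in> unit_harmonic \<Longrightarrow> n \<in> N \<Longrightarrow> f (\<phi> n x) = f x"
    and N: "N \<subseteq> carrier G" and z: "z \<in> carrier G" and g: "g \<in> carrier G"
    and n: "n \<in> N" "z \<otimes>\<^bsub>G\<^esub> g = g \<otimes>\<^bsub>G\<^esub> z \<otimes>\<^bsub>G\<^esub> n"
    and f: "f \<in> unit_harmonic"
  shows "f (\<phi> z (\<phi> g y)) = f (\<phi> g (\<phi> z y))"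
proof -
  have "\<phi> z (\<phi> g y) = \<phi> g (\<phi> z (\<phi> n y))"
    using action_mult G_group z g n N by (metis subsetD group.is_monoid monoid.m_closed)
  moreover have "(\<lambda>x. f (\<phi> g (\<phi> z x))) \<in> unit_harmonic"
    using unit_harmonic_translate f g z by blast
  ultimately show ?thesis
    using N_inv[of "\<lambda>x. f (\<phi> g (\<phi> z x))" n y] n(1) by simp
qed

lemma orbit_increment_lower_bound:
  assumes S_bound: "\<And>F y. F \<in> unit_harmonic \<Longrightarrow> F (\<phi> z y) - F y \<le> S"
    and z: "z \<in> carrier G" and f: "f \<in> unit_harmonic" and K: "0 \<le> K"
    and harnack: "\<And>u. harmonic b u \<Longrightarrow> \<forall>y. 0 \<le> u y \<Longrightarrow> u (\<phi> z v) \<le> K * u v"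
    and start: "S - e \<le> f (\<phi> z v) - f v"
  shows "S - K ^ k * e \<le> f ((\<phi> z ^^ Suc k) v) - f ((\<phi> z ^^ k) v)"
proof (induction k)
  case 0
  show ?case
    using start by simp
next
  case (Suc k)
  define F where "F y = f ((\<phi> z ^^ k) y)" for y
  define u where "u y = S - (F (\<phi> z y) - F y)" for y
  have F: "F \<in> unit_harmonic"
    unfolding F_def using unit_harmonic_iterate[OF f z] .
  then have "harmonic b u"
    unfolding u_def unit_harmonic_def
    by (intro harmonic_diff harmonic_const harmonic_translate[OF _ z]) auto
  moreover have "\<forall>y. 0 \<le> u y"
    unfolding u_def using S_bound[OF F] by simp
  ultimately have "u (\<phi> z v) \<le> K * u v"
    by (rule harnack)
  also have "\<dots> \<le> K * (K ^ k * e)"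
    using Suc K unfolding u_def F_def by (intro mult_left_mono) (simp_all add: funpow_Suc_right del: funpow.simps)
  finally show ?case
    unfolding u_def F_def by (simp add: funpow_Suc_right del: funpow.simps)
qed

lemma orbit_growth_bound:
  assumes S_bound: "\<And>F y. F \<in> unit_harmonic \<Longrightarrow> F (\<phi> z y) - F y \<le> S" and S_nonneg: "0 \<le> S"
    and z: "z \<in> carrier G" and f: "f \<in> unit_harmonic" and K: "1 \<le> K"
    and harnack: "\<And>u. harmonic b u \<Longrightarrow> \<forall>y. 0 \<le> u y \<Longrightarrow> u (\<phi> z v) \<le> K * u v"
    and start: "S - S / (2 * K ^ n) \<le> f (\<phi> z v) - f v"
  shows "real n * S \<le> 4"
proof -
  define e where "e = S / (2 * K ^ n)"
  have "K \<noteq> 0" "0 < K ^ n"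
    using K by simp_all
  then have e: "0 \<le> e" "K ^ n * e = S / 2"
    using S_nonneg unfolding e_def by (simp_all add: field_simps)
  have "S / 2 \<le> f ((\<phi> z ^^ Suc k) v) - f ((\<phi> z ^^ k) v)" if "k < n" for k
  proof -
    have "K ^ k * e \<le> K ^ n * e"
      using K e(1) that by (intro mult_right_mono power_increasing) auto
    moreover have "S - K ^ k * e \<le> f ((\<phi> z ^^ Suc k) v) - f ((\<phi> z ^^ k) v)"
      by (rule orbit_increment_lower_bound[OF _ z f _ _ start[folded e_def]]) (use S_bound K harnack in auto)
    ultimately show ?thesis
      using e(2) by linarith
  qed
  then have "real n * (S / 2) \<le> (\<Sum>k<n. f ((\<phi> z ^^ Suc k) v) - f ((\<phi> z ^^ k) v))"
    using sum_bounded_below[of "{..<n}" "S / 2" "\<lambda>k. f ((\<phi> z ^^ Suc k) v) - f ((\<phi> z ^^ k) v)"]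
    by simp
  also have "\<dots> = f ((\<phi> z ^^ n) v) - f v"
    using sum_lessThan_telescope[of "\<lambda>k. f ((\<phi> z ^^ k) v)" n] by simp
  also have "\<dots> \<le> 2"
    using f by (rule unit_harmonic_diff_le)
  finally show ?thesis
    by simp
qed

lemma displacement_gap:
  assumes N_inv: "\<And>f n x. f \<in> unit_harmonic \<Longrightarrow> n \<in> N \<Longrightarrow> f (\<phi> n x) = f x"
    and N: "N \<subseteq> carrier G" and z: "z \<in> carrier G"
    and central: "\<And>g. g \<in> carrier G \<Longrightarrow> \<exists>n\<in>N. z \<otimes>\<^bsub>G\<^esub> g = g \<otimes>\<^bsub>G\<^esub> z \<otimes>\<^bsub>G\<^esub> n"
    and S_bound: "\<And>f x. f \<in> unit_harmonic \<Longrightarrow> f (\<phi> z x) - f x \<le> S" and S_pos: "0 < S"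
  shows "\<exists>e>0. \<forall>f\<in>unit_harmonic. \<forall>x. f (\<phi> z x) - f x \<le> S - e"
proof -
  obtain V where V: "finite V" "(\<Union>g \<in> carrier G. \<phi> g ` V) = UNIV"
    using cocompact_action unfolding cocompact_def by blast
  obtain K where K: "K \<ge> 1" and harnack_V:
    "\<And>u. harmonic b u \<Longrightarrow> \<forall>y. 0 \<le> u y \<Longrightarrow> \<forall>(v, w)\<in>(\<lambda>v. (v, \<phi> z v)) ` V. u w \<le> K * u v"
    using harnack_finite[OF locally_finite connected finite_imageI[OF V(1)]] by blast
  have harnack: "u (\<phi> z v) \<le> K * u v" if "harmonic b u" "\<forall>y. 0 \<le> u y" "v \<in> V" for u v
    using harnack_V[OF that(1,2)] that(3) by fastforce
  obtain n :: nat where n: "4 < real n * S"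
    using ex_less_of_nat_mult[OF S_pos] by blast
  have "f (\<phi> z x) - f x \<le> S - S / (2 * K ^ n)" if f: "f \<in> unit_harmonic" for f x
  proof (rule ccontr)
    assume far: "\<not> f (\<phi> z x) - f x \<le> S - S / (2 * K ^ n)"
    obtain g v where g: "g \<in> carrier G" and v: "v \<in> V" and x: "x = \<phi> g v"
      using V(2) by blast
    obtain m where m: "m \<in> N" "z \<otimes>\<^bsub>G\<^esub> g = g \<otimes>\<^bsub>G\<^esub> z \<otimes>\<^bsub>G\<^esub> m"
      using central[OF g] by blast
    have "f (\<phi> z x) = f (\<phi> g (\<phi> z v))"
      unfolding x using unit_harmonic_commute[OF N_inv N z g m f] .
    then have start: "S - S / (2 * K ^ n) \<le> f (\<phi> g (\<phi> z v)) - f (\<phi> g v)"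
      using far unfolding x by simp
    have "real n * S \<le> 4"
      by (rule orbit_growth_bound[OF _ _ z unit_harmonic_translate[OF f g] K])
        (use S_bound S_pos harnack v start in auto)
    with n show False
      by simp
  qed
  moreover have "0 < S / (2 * K ^ n)"
    using S_pos K by simp
  ultimately show ?thesis
    by blast
qed

lemma unit_harmonic_invariant_if_central:
  assumes N_inv: "\<And>f n x. f \<in> unit_harmonic \<Longrightarrow> n \<in> N \<Longrightarrow> f (\<phi> n x) = f x"
    and N: "N \<subseteq> carrier G" and z: "z \<in> carrier G"
    and central: "\<And>g. g \<in> carrier G \<Longrightarrow> \<exists>n\<in>N. z \<otimes>\<^bsub>G\<^esub> g = g \<otimes>\<^bsub>G\<^esub> z \<otimes>\<^bsub>G\<^esub> n"
    and f: "f \<in> unit_harmonic"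
  shows "f (\<phi> z x) = f x"
proof -
  define D where "D = {F (\<phi> z y) - F y | F y. F \<in> unit_harmonic}"
  have D_bdd: "bdd_above D"
    unfolding D_def using unit_harmonic_diff_le by (intro bdd_aboveI) blast
  have "(\<lambda>_. 0) \<in> unit_harmonic"
    unfolding unit_harmonic_def using harmonic_const by simp
  then have D_nonempty: "D \<noteq> {}"
    unfolding D_def by blast
  have le_Sup: "F (\<phi> z y) - F y \<le> Sup D" if "F \<in> unit_harmonic" for F y
    by (rule cSup_upper[OF _ D_bdd]) (use that D_def in blast)
  have "Sup D \<le> 0"
  proof (rule ccontr)
    assume "\<not> Sup D \<le> 0"
    then obtain e where "0 < e" and "\<forall>F\<in>unit_harmonic. \<forall>y. F (\<phi> z y) - F y \<le> Sup D - e"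
      using displacement_gap[OF N_inv N z central le_Sup] by auto
    then have "Sup D \<le> Sup D - e"
      unfolding D_def by (intro cSup_least) (use D_nonempty D_def in auto)
    with \<open>0 < e\<close> show False
      by simp
  qed
  then show ?thesis
    using le_Sup[OF f, of x] le_Sup[OF unit_harmonic_uminus[OF f], of x] by simp
qed

lemma unit_harmonic_invariant:
  assumes nilpotent: "lower_central G m = {\<one>\<^bsub>G\<^esub>}"
    and f: "f \<in> unit_harmonic" and g: "g \<in> carrier G"
  shows "f (\<phi> g x) = f x"
proof -
  interpret G: group G
    by (rule G_group)
  have "\<forall>f\<in>unit_harmonic. \<forall>a\<in>lower_central G k. \<forall>x. f (\<phi> a x) = f x" if "k \<le> m" for k
    using that
  proof (induction k rule: inc_induct)
    case base
    show ?case
      using nilpotent action_one by simp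
  next
    case (step k)
    have sub: "lower_central G j \<subseteq> carrier G" for j
      using G.lower_central_subgroup subgroup.subset by metis
    show ?case
      using unit_harmonic_invariant_if_central[OF _ sub subsetD[OF sub] G.lower_central_commute] step.IH
      by blast
  qed
  from this[of 0] show ?thesis
    using f g by simp
qed

lemma invariant_harmonic_const:
  assumes f: "harmonic b f" and invariant: "\<And>g x. g \<in> carrier G \<Longrightarrow> f (\<phi> g x) = f x"
  shows "\<exists>c. \<forall>x. f x = c"
proof -
  obtain V where V: "finite V" "(\<Union>g \<in> carrier G. \<phi> g ` V) = UNIV"
    using cocompact_action unfolding cocompact_def by blast
  then have "V \<noteq> {}"
    by auto
  define M where "M = Max (f ` V)"
  have f_le_M: "f x \<le> M" for x
  proof -
    obtain g v where "g \<in> carrier G" "v \<in> V" "x = \<phi> g v"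
      using V(2) by blast
    then show ?thesis
      unfolding M_def using invariant V(1) by simp
  qed
  obtain v0 where "f v0 = M"
    unfolding M_def using Max_in[OF finite_imageI[OF V(1)]] \<open>V \<noteq> {}\<close> by (metis empty_is_image imageE)
  have "f x = M" for x
  proof -
    have "harmonic b (\<lambda>y. M - f y)" "\<forall>y. 0 \<le> M - f y"
      using harmonic_diff[OF harmonic_const f] f_le_M by auto
    moreover obtain K where "\<And>u. harmonic b u \<Longrightarrow> \<forall>y. 0 \<le> u y \<Longrightarrow> u x \<le> K * u v0"
      using harnack_path[OF locally_finite] connected unfolding connected_graph_def by blast
    ultimately have "M - f x \<le> K * (M - f v0)"
      by blast
    then show ?thesis
      using \<open>f v0 = M\<close> f_le_M[of x] by simp
  qed
  then show ?thesis
    by blast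
qed

end

theorem corollary4:
  fixes b :: "'x::countable \<Rightarrow> 'x \<Rightarrow> real"
    and G :: "('g, 'c) monoid_scheme"
    and \<phi> :: "'g \<Rightarrow> 'x \<Rightarrow> 'x"
    and f :: "'x \<Rightarrow> real"
  assumes "is_graph b"
    and "locally_finite_graph b"
    and "connected_graph b"
    and "nilpotent_group G"
    and "group_action G UNIV \<phi>"
    and "cocompact G \<phi>"
    and "H_invariant G \<phi> b"
    and "\<exists>C. \<forall>x. \<bar>f x\<bar> \<le> C"
    and "f \<in> H_dom b"
    and "H_op b f = (\<lambda>x. 0)"
  shows "\<exists>c. \<forall>x. f x = c"
proof -
  obtain m where group: "group G" and nilpotent: "lower_central G m = {\<one>\<^bsub>G\<^esub>}"
    using assms(4) unfolding nilpotent_group_def by blast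
  interpret harmonic_action b G \<phi>
    by (rule harmonic_action.intro[OF assms(1-3) group assms(5-7)])
  have f: "harmonic b f"
    using harmonic_iff_H_op[OF assms(1,2)] assms(10) by simp
  obtain C0 where C0: "\<And>x. \<bar>f x\<bar> \<le> C0"
    using assms(8) by blast
  define C where "C = \<bar>C0\<bar> + 1"
  have C: "\<bar>f x\<bar> \<le> C" "0 < C" for x
    unfolding C_def using C0[of x] abs_ge_self[of C0] by linarith+
  have "(\<lambda>x. 1 / C * f x) \<in> unit_harmonic"
    unfolding unit_harmonic_def using harmonic_cmult[OF f, of "1 / C"] C by (simp add: abs_mult)
  then have "f (\<phi> g x) = f x" if "g \<in> carrier G" for g x
    using unit_harmonic_invariant[OF nilpotent _ that, of "\<lambda>x. 1 / C * f x" x] C(2) by simp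
  then show ?thesis
    using invariant_harmonic_const[OF f] by blast
qed

end
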